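(* As $\alpha$ ranges over all edge weight systems $\alpha\in\mathcal W(\tau_\lambda;\mathbb Z)$, the elements $Z_\alpha=[Z_1^{\alpha_1}Z_2^{\alpha_2}\cdots Z_n^{\alpha_n}]$ form a basis of the complex vector space $\mathcal Z^\omega(\lambda)$.
   Context: $S$ is a closed oriented surface $\bar S$ of genus $g$ minus $s\ge1$ points $v_1,\dots,v_s$, with $2-2g-s<0$; $\lambda$ is an ideal triangulation (a triangulation of $\bar S$ with vertex set exactly $\{v_1,\dots,v_s\}$) with edges $\lambda_1,\dots,\lambda_n$, $n=6g+3s-6$. Let $a_{ij}\in\{0,1,2\}$ be the number of times an end of $\lambda_j$ immediately succeeds an end of $\lambda_i$ when going counterclockwise around a puncture, $\sigma_{ij}=a_{ij}-a_{ji}$. For $\omega\in\mathbb C-\{0\}$, $\mathcal T^\omega(\lambda)$ is the algebra with generators $Z_i^{\pm1}$ and relations $Z_iZ_j=\omega^{2\sigma_{ij}}Z_jZ_i$. Weyl ordering: $[Z_{i_1}^{n_1}\cdots Z_{i_l}^{n_l}]=\omega^{-\sum_{u<v}n_un_v\sigma_{i_ui_v}}Z_{i_1}^{n_1}\cdots Z_{i_l}^{n_l}$. A monomial $Z_1^{k_1}\cdots Z_n^{k_n}$ is balanced if for every face of $\lambda$ with sides $\lambda_{i_1},\lambda_{i_2},\lambda_{i_3}$ the sum $k_{i_1}+k_{i_2}+k_{i_3}$ is even; the balanced Chekhov–Fock algebra $\mathcal Z^\omega(\lambda)$ is the subalgebra of $\mathcal T^\omega(\lambda)$ generated by balanced monomials.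 Train track $\tau_\lambda$: in each face of $\lambda$, $\tau_\lambda$ consists of three arcs, each joining two sides of the face and turning around the corner between them; these arcs meet each edge $\lambda_i$ at a single switch, so that $\tau_\lambda$ has one switch per edge of $\lambda$ and three edges per face. $\mathcal W(\tau_\lambda;\mathbb Z)$ is the group of assignments of an integer to each edge of $\tau_\lambda$ such that at each switch the sum of the weights of edges incoming on one side equals the sum on the other side. For $\alpha\in\mathcal W(\tau_\lambda;\mathbb Z)$, $\alpha_i$ denotes the sum of the weights of the edges of $\tau_\lambda$ on one side of the switch on $\lambda_i$, and $Z_\alpha=[Z_1^{\alpha_1}\cdots Z_n^{\alpha_n}]$. *)

theory Defs
  imports Complex_Main "HOL-Library.Function_Algebras"
begin

text \<open>Edges are 0..<n, faces 0..<m.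
  side f a (a < 3) is the edge forming the a-th side of face f, the sides being
  listed in counterclockwise order around the face.  Gluing the faces along
  equally labelled sides (orientation reversingly) gives the surface.\<close>

definition face_sides :: "nat \<Rightarrow> (nat \<Rightarrow> nat \<Rightarrow> nat) \<Rightarrow> nat \<Rightarrow> (nat \<times> nat) set" where
  "face_sides m side i = {(f, a). f < m \<and> a < 3 \<and> side f a = i}"

definition face_adj :: "nat \<Rightarrow> (nat \<Rightarrow> nat \<Rightarrow> nat) \<Rightarrow> (nat \<times> nat) set" where
  "face_adj m side = {(f, f'). f < m \<and> f' < m \<and> (\<exists>a<3. \<exists>a'<3. side f a = side f' a')}"

definition ideal_triangulation :: "nat \<Rightarrow> nat \<Rightarrow> (nat \<Rightarrow> nat \<Rightarrow> nat) \<Rightarrow> bool" where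
  "ideal_triangulation n m side \<longleftrightarrow>
     0 < n \<and>
     (\<forall>f<m. \<forall>a<3. side f a < n) \<and>
     (\<forall>i<n. card (face_sides m side i) = 2) \<and>
     (\<forall>f<m. \<forall>f'<m. (f, f') \<in> (face_adj m side)\<^sup>*)"

text \<open>a_ij: number of corners at which an end of edge j immediately succeeds an end
  of edge i going counterclockwise around the puncture.  At the corner of face f
  between sides a and a+1, going counterclockwise around the vertex one passes
  from side a+1 to side a.\<close>

definition a_mat :: "nat \<Rightarrow> (nat \<Rightarrow> nat \<Rightarrow> nat) \<Rightarrow> nat \<Rightarrow> nat \<Rightarrow> nat" where
  "a_mat m side i j = card {(f, a). f < m \<and> a < 3 \<and> side f ((a + 1) mod 3) = i \<and> side f a = j}"

definition sigma :: "nat \<Rightarrow> (nat \<Rightarrow> nat \<Rightarrow> nat) \<Rightarrow> nat \<Rightarrow> nat \<Rightarrow> int" where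
  "sigma m side i j = int (a_mat m side i j) - int (a_mat m side j i)"

text \<open>Chekhov--Fock algebra T^omega(lambda), realised in its standard normal form:
  an element is a finitely supported complex function on exponent vectors
  k :: nat => int (with k i = 0 for i >= n); the function mono k is the ordered
  monomial Z_0^(k 0) ... Z_(n-1)^(k (n-1)).  The product is determined by the
  relations Z_i Z_j = omega^(2 sigma_ij) Z_j Z_i.\<close>

definition expvecs :: "nat \<Rightarrow> (nat \<Rightarrow> int) set" where
  "expvecs n = {k. \<forall>i\<ge>n. k i = 0}"

definition mono :: "(nat \<Rightarrow> int) \<Rightarrow> (nat \<Rightarrow> int) \<Rightarrow> complex" where
  "mono k = (\<lambda>x. if x = k then 1 else 0)"

definition qt_mult :: "nat \<Rightarrow> (nat \<Rightarrow> nat \<Rightarrow> int) \<Rightarrow> complex \<Rightarrow>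
    ((nat \<Rightarrow> int) \<Rightarrow> complex) \<Rightarrow> ((nat \<Rightarrow> int) \<Rightarrow> complex) \<Rightarrow> ((nat \<Rightarrow> int) \<Rightarrow> complex)" where
  "qt_mult n \<sigma> \<omega> p q = (\<lambda>x. \<Sum>(k, l) \<in> {(k, l). p k \<noteq> 0 \<and> q l \<noteq> 0 \<and> k + l = x}.
      p k * q l * \<omega> powi (2 * (\<Sum>i<n. \<Sum>j<i. k i * l j * \<sigma> i j)))"

definition cscale :: "complex \<Rightarrow> ((nat \<Rightarrow> int) \<Rightarrow> complex) \<Rightarrow> ((nat \<Rightarrow> int) \<Rightarrow> complex)" where
  "cscale c p = (\<lambda>x. c * p x)"

definition weyl :: "nat \<Rightarrow> (nat \<Rightarrow> nat \<Rightarrow> int) \<Rightarrow> complex \<Rightarrow> (nat \<Rightarrow> int) \<Rightarrow> ((nat \<Rightarrow> int) \<Rightarrow> complex)" where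
  "weyl n \<sigma> \<omega> k = cscale (\<omega> powi (- (\<Sum>v<n. \<Sum>u<v. k u * k v * \<sigma> u v))) (mono k)"

definition balanced :: "nat \<Rightarrow> (nat \<Rightarrow> nat \<Rightarrow> nat) \<Rightarrow> (nat \<Rightarrow> int) \<Rightarrow> bool" where
  "balanced m side k \<longleftrightarrow> (\<forall>f<m. even (k (side f 0) + k (side f 1) + k (side f 2)))"

inductive_set bal_alg :: "nat \<Rightarrow> nat \<Rightarrow> (nat \<Rightarrow> nat \<Rightarrow> nat) \<Rightarrow> complex \<Rightarrow> ((nat \<Rightarrow> int) \<Rightarrow> complex) set"
  for n m side \<omega> where
  gen: "k \<in> expvecs n \<Longrightarrow> balanced m side k \<Longrightarrow> mono k \<in> bal_alg n m side \<omega>"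
| add: "p \<in> bal_alg n m side \<omega> \<Longrightarrow> q \<in> bal_alg n m side \<omega> \<Longrightarrow> p + q \<in> bal_alg n m side \<omega>"
| smult: "p \<in> bal_alg n m side \<omega> \<Longrightarrow> cscale c p \<in> bal_alg n m side \<omega>"
| mult: "p \<in> bal_alg n m side \<omega> \<Longrightarrow> q \<in> bal_alg n m side \<omega> \<Longrightarrow>
          qt_mult n (sigma m side) \<omega> p q \<in> bal_alg n m side \<omega>"

text \<open>Train track tau_lambda: its edges are the corners (f, c), f < m, c < 3, the
  arc at corner c of face f joining sides c and (c+1) mod 3.  The arcs of face f
  meeting side a are the corners a and (a+2) mod 3.\<close>

definition side_wt :: "(nat \<Rightarrow> nat \<Rightarrow> int) \<Rightarrow> nat \<Rightarrow> nat \<Rightarrow> int" where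
  "side_wt w f a = w f a + w f ((a + 2) mod 3)"

definition edge_weight_systems :: "nat \<Rightarrow> (nat \<Rightarrow> nat \<Rightarrow> nat) \<Rightarrow> (nat \<Rightarrow> nat \<Rightarrow> int) set" where
  "edge_weight_systems m side = {w.
     (\<forall>f c. (m \<le> f \<or> 3 \<le> c) \<longrightarrow> w f c = 0) \<and>
     (\<forall>f<m. \<forall>a<3. \<forall>f'<m. \<forall>a'<3. side f a = side f' a' \<longrightarrow> side_wt w f a = side_wt w f' a')}"

definition alpha_vec :: "nat \<Rightarrow> nat \<Rightarrow> (nat \<Rightarrow> nat \<Rightarrow> nat) \<Rightarrow> (nat \<Rightarrow> nat \<Rightarrow> int) \<Rightarrow> (nat \<Rightarrow> int)" where
  "alpha_vec n m side w = (\<lambda>i. if i < n then (SOME x. \<exists>f<m. \<exists>a<3. side f a = i \<and> x = side_wt w f a) else 0)"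

definition Z_alpha :: "nat \<Rightarrow> nat \<Rightarrow> (nat \<Rightarrow> nat \<Rightarrow> nat) \<Rightarrow> complex \<Rightarrow> (nat \<Rightarrow> nat \<Rightarrow> int) \<Rightarrow> ((nat \<Rightarrow> int) \<Rightarrow> complex)" where
  "Z_alpha n m side \<omega> w = weyl n (sigma m side) \<omega> (alpha_vec n m side w)"

end

theory Submission
  imports Defs
begin

text \<open>A weight system is recovered from its edge sums by
  \<open>2 w(f,c) = \<alpha>(side f c) + \<alpha>(side f (c+1)) - \<alpha>(side f (c+2))\<close> in every face, and halving
  the same expression turns any balanced exponent vector into a weight system; so the map to
  edge sums is a bijection onto the balanced exponent vectors.  Each \<open>Z_\<alpha>\<close> is a nonzero
  multiple of the normal-form monomial with these exponents, hence the \<open>Z_\<alpha>\<close> form a basis of the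
  functions finitely supported on balanced exponents.  That space is the whole balanced algebra,
  since the support of a product lies in the sum of the supports and balanced vectors are closed
  under addition.\<close>

interpretation M: module cscale
  by standard (auto simp: cscale_def fun_eq_iff algebra_simps)

lemma sum_fun_apply: "(sum f A) x = (\<Sum>a\<in>A. f a x)" for f :: "'a \<Rightarrow> 'b \<Rightarrow> 'c::comm_monoid_add"
  by (induction A rule: infinite_finite_induct) auto

lemma cscale_mono_apply: "cscale c (mono k) x = (if x = k then c else 0)"
  by (simp add: cscale_def mono_def)

definition finsupp_on :: "(nat \<Rightarrow> int) set \<Rightarrow> ((nat \<Rightarrow> int) \<Rightarrow> complex) set" where
  "finsupp_on K = {p. finite {x. p x \<noteq> 0} \<and> {x. p x \<noteq> 0} \<subseteq> K}"

lemma finsupp_expansion: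
  assumes "finite {x. p x \<noteq> 0}"
  shows "(\<Sum>x | p x \<noteq> 0. cscale (p x) (mono x)) = p"
proof
  fix y
  have "(\<Sum>x | p x \<noteq> 0. cscale (p x) (mono x)) y = (\<Sum>x | p x \<noteq> 0. if y = x then p x else 0)"
    by (simp add: sum_fun_apply cscale_mono_apply)
  also have "\<dots> = p y"
    using assms by (simp add: sum.delta')
  finally show "(\<Sum>x | p x \<noteq> 0. cscale (p x) (mono x)) y = p y" .
qed

lemma subspace_finsupp_on: "M.subspace (finsupp_on K)"
proof (rule M.subspaceI)
  fix p q assume "p \<in> finsupp_on K" "q \<in> finsupp_on K"
  moreover have "{x. (p + q) x \<noteq> 0} \<subseteq> {x. p x \<noteq> 0} \<union> {x. q x \<noteq> 0}" by auto
  ultimately show "p + q \<in> finsupp_on K"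
    by (auto simp: finsupp_on_def intro: finite_subset)
next
  fix c p assume "p \<in> finsupp_on K"
  moreover have "{x. cscale c p x \<noteq> 0} \<subseteq> {x. p x \<noteq> 0}" by (auto simp: cscale_def)
  ultimately show "cscale c p \<in> finsupp_on K"
    by (auto simp: finsupp_on_def intro: finite_subset)
qed (simp add: finsupp_on_def)

lemma span_scaled_monos:
  assumes c: "\<And>k. k \<in> K \<Longrightarrow> c k \<noteq> 0"
  shows "M.span ((\<lambda>k. cscale (c k) (mono k)) ` K) = finsupp_on K"
proof
  show "M.span ((\<lambda>k. cscale (c k) (mono k)) ` K) \<subseteq> finsupp_on K"
    by (intro M.span_minimal subspace_finsupp_on)
      (auto simp: finsupp_on_def cscale_mono_apply split: if_splits)
next
  show "finsupp_on K \<subseteq> M.span ((\<lambda>k. cscale (c k) (mono k)) ` K)"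
  proof
    fix p assume p: "p \<in> finsupp_on K"
    have "cscale (p x) (mono x) \<in> M.span ((\<lambda>k. cscale (c k) (mono k)) ` K)" if "p x \<noteq> 0" for x
    proof -
      have x: "x \<in> K" using that p by (auto simp: finsupp_on_def)
      have "cscale (p x) (mono x) = cscale (p x / c x) (cscale (c x) (mono x))"
        using c[OF x] by (simp add: cscale_def fun_eq_iff)
      also have "\<dots> \<in> M.span ((\<lambda>k. cscale (c k) (mono k)) ` K)"
        using x by (intro M.span_scale M.span_base imageI)
      finally show ?thesis .
    qed
    then have "(\<Sum>x | p x \<noteq> 0. cscale (p x) (mono x)) \<in> M.span ((\<lambda>k. cscale (c k) (mono k)) ` K)"
      by (intro M.span_sum) simp
    then show "p \<in> M.span ((\<lambda>k. cscale (c k) (mono k)) ` K)"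
      using p by (simp add: finsupp_on_def finsupp_expansion)
  qed
qed

lemma independent_scaled_monos:
  assumes c: "\<And>k. k \<in> K \<Longrightarrow> c k \<noteq> 0"
  shows "\<not> M.dependent ((\<lambda>k. cscale (c k) (mono k)) ` K)"
proof
  let ?b = "\<lambda>k. cscale (c k) (mono k)"
  assume "M.dependent (?b ` K)"
  then obtain t u v0 where t: "finite t" "t \<subseteq> ?b ` K" and lin: "(\<Sum>v\<in>t. cscale (u v) v) = 0"
    and v0: "v0 \<in> t" "u v0 \<noteq> 0"
    unfolding M.dependent_explicit by blast
  obtain k0 where k0: "k0 \<in> K" "v0 = ?b k0" using v0 t by blast
  have others: "u v * v k0 = 0" if v: "v \<in> t - {v0}" for v
  proof -
    obtain k where "k \<in> K" "v = ?b k" using v t by blast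
    then show ?thesis using v k0 by (auto simp: cscale_mono_apply)
  qed
  \<comment> \<open>Evaluating the relation at \<open>k0\<close> isolates the coefficient of \<open>v0\<close>.\<close>
  have "0 = (\<Sum>v\<in>t. u v * v k0)"
    using fun_cong[OF lin, of k0] by (simp add: sum_fun_apply cscale_def)
  also have "\<dots> = u v0 * v0 k0"
    using sum.remove[OF t(1) v0(1), of "\<lambda>v. u v * v k0"] others by simp
  also have "\<dots> = u v0 * c k0"
    using k0 by (simp add: cscale_mono_apply)
  finally show False
    using v0(2) c[OF k0(1)] by simp
qed

lemma support_qt_mult:
  "{x. qt_mult n \<sigma> \<omega> p q x \<noteq> 0} \<subseteq> (\<lambda>(k, l). k + l) ` ({k. p k \<noteq> 0} \<times> {l. q l \<noteq> 0})"
proof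
  fix x assume "x \<in> {x. qt_mult n \<sigma> \<omega> p q x \<noteq> 0}"
  moreover have "qt_mult n \<sigma> \<omega> p q x = 0" if "{(k, l). p k \<noteq> 0 \<and> q l \<noteq> 0 \<and> k + l = x} = {}"
    unfolding qt_mult_def that by simp
  ultimately show "x \<in> (\<lambda>(k, l). k + l) ` ({k. p k \<noteq> 0} \<times> {l. q l \<noteq> 0})"
    by auto
qed

lemma qt_mult_finsupp_on:
  assumes "p \<in> finsupp_on K" "q \<in> finsupp_on K" and add: "\<And>k l. k \<in> K \<Longrightarrow> l \<in> K \<Longrightarrow> k + l \<in> K"
  shows "qt_mult n \<sigma> \<omega> p q \<in> finsupp_on K"
proof -
  let ?S = "(\<lambda>(k, l). k + l) ` ({k. p k \<noteq> 0} \<times> {l. q l \<noteq> 0})"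
  have "finite ?S" "?S \<subseteq> K"
    using assms by (auto simp: finsupp_on_def)
  then show ?thesis
    using support_qt_mult[of n \<sigma> \<omega> p q] finite_subset by (auto simp: finsupp_on_def)
qed

definition bal_exps :: "nat \<Rightarrow> nat \<Rightarrow> (nat \<Rightarrow> nat \<Rightarrow> nat) \<Rightarrow> (nat \<Rightarrow> int) set" where
  "bal_exps n m side = {k \<in> expvecs n. balanced m side k}"

lemma bal_exps_add: "k \<in> bal_exps n m side \<Longrightarrow> l \<in> bal_exps n m side \<Longrightarrow> k + l \<in> bal_exps n m side"
  by (auto simp: bal_exps_def expvecs_def balanced_def algebra_simps)

lemma subspace_bal_alg: "M.subspace (bal_alg n m side \<omega>)"
proof (rule M.subspaceI)
  have "mono 0 \<in> bal_alg n m side \<omega>"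
    by (rule bal_alg.gen) (auto simp: expvecs_def balanced_def)
  then have "cscale 0 (mono 0) \<in> bal_alg n m side \<omega>"
    by (rule bal_alg.smult)
  then show "0 \<in> bal_alg n m side \<omega>"
    by (simp add: cscale_def zero_fun_def)
qed (auto intro: bal_alg.add bal_alg.smult)

lemma bal_alg_eq_finsupp_on: "bal_alg n m side \<omega> = finsupp_on (bal_exps n m side)"
proof
  show "bal_alg n m side \<omega> \<subseteq> finsupp_on (bal_exps n m side)"
  proof
    fix p assume "p \<in> bal_alg n m side \<omega>"
    then show "p \<in> finsupp_on (bal_exps n m side)"
    proof (induction rule: bal_alg.induct)
      case (gen k)
      then show ?case by (auto simp: finsupp_on_def mono_def bal_exps_def)
    next
      case (add p q)
      then show ?case using M.subspace_add[OF subspace_finsupp_on] by blast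
    next
      case (smult p c)
      then show ?case using M.subspace_scale[OF subspace_finsupp_on] by blast
    next
      case (mult p q)
      then show ?case by (intro qt_mult_finsupp_on bal_exps_add)
    qed
  qed
next
  have "M.span ((\<lambda>k. cscale 1 (mono k)) ` bal_exps n m side) \<subseteq> bal_alg n m side \<omega>"
    by (intro M.span_minimal subspace_bal_alg) (auto simp: bal_exps_def intro: bal_alg.gen)
  then show "finsupp_on (bal_exps n m side) \<subseteq> bal_alg n m side \<omega>"
    using span_scaled_monos[of "bal_exps n m side" "\<lambda>_. 1"] by simp
qed

lemma side_wt_eq_if_same_edge:
  assumes "w \<in> edge_weight_systems m side" "f < m" "a < 3" "f' < m" "a' < 3" "side f a = side f' a'"
  shows "side_wt w f a = side_wt w f' a'"
  using assms unfolding edge_weight_systems_def by blast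

lemma edge_weight_systems_zero:
  "w \<in> edge_weight_systems m side \<Longrightarrow> m \<le> f \<or> 3 \<le> c \<Longrightarrow> w f c = 0"
  unfolding edge_weight_systems_def by blast

context
  fixes n m :: nat and side :: "nat \<Rightarrow> nat \<Rightarrow> nat"
  assumes tri: "ideal_triangulation n m side"
begin

lemma alpha_vec_side:
  assumes w: "w \<in> edge_weight_systems m side" and f: "f < m" and a: "a < 3"
  shows "alpha_vec n m side w (side f a) = side_wt w f a"
proof -
  define P where "P x \<longleftrightarrow> (\<exists>f'<m. \<exists>a'<3. side f' a' = side f a \<and> x = side_wt w f' a')" for x
  have "P (side_wt w f a)"
    unfolding P_def using f a by blast
  then have "P (SOME x. P x)"
    by (rule someI)
  then obtain f' a' where f': "f' < m" "a' < 3" "side f' a' = side f a"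
    and some_eq: "(SOME x. P x) = side_wt w f' a'"
    unfolding P_def by blast
  have "(SOME x. P x) = side_wt w f a"
    unfolding some_eq by (rule side_wt_eq_if_same_edge[OF w f'(1,2) f a f'(3)])
  moreover have "side f a < n"
    using tri f a by (auto simp: ideal_triangulation_def)
  ultimately show ?thesis
    by (simp add: alpha_vec_def P_def[abs_def])
qed

lemma weight_from_alpha_vec:
  assumes w: "w \<in> edge_weight_systems m side" and f: "f < m" and c: "c < 3"
  shows "2 * w f c = alpha_vec n m side w (side f c) + alpha_vec n m side w (side f ((c + 1) mod 3))
                     - alpha_vec n m side w (side f ((c + 2) mod 3))"
proof -
  have "c = 0 \<or> c = 1 \<or> c = 2" using c by auto
  then show ?thesis
    using alpha_vec_side[OF w f] by (auto simp: side_wt_def numeral_2_eq_2)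
qed

lemma inj_on_alpha_vec: "inj_on (alpha_vec n m side) (edge_weight_systems m side)"
proof (rule inj_onI, intro ext)
  fix w w' f c
  assume w: "w \<in> edge_weight_systems m side" and w': "w' \<in> edge_weight_systems m side"
    and eq: "alpha_vec n m side w = alpha_vec n m side w'"
  show "w f c = w' f c"
  proof (cases "f < m \<and> c < 3")
    case True
    then show ?thesis using weight_from_alpha_vec[OF w] weight_from_alpha_vec[OF w'] eq by force
  next
    case False
    then have "m \<le> f \<or> 3 \<le> c" by auto
    then show ?thesis using edge_weight_systems_zero w w' by metis
  qed
qed

lemma alpha_vec_in_bal_exps:
  assumes w: "w \<in> edge_weight_systems m side"
  shows "alpha_vec n m side w \<in> bal_exps n m side"
proof -
  have "alpha_vec n m side w (side f 0) + alpha_vec n m side w (side f 1) + alpha_vec n m side w (side f 2)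
          = 2 * (w f 0 + w f 1 + w f 2)" if "f < m" for f
    using alpha_vec_side[OF w that] by (simp add: side_wt_def numeral_2_eq_2)
  then have "balanced m side (alpha_vec n m side w)"
    unfolding balanced_def by simp
  then show ?thesis
    by (simp add: bal_exps_def expvecs_def alpha_vec_def)
qed

lemma bal_exps_subset_alpha_vec_image:
  "bal_exps n m side \<subseteq> alpha_vec n m side ` edge_weight_systems m side"
proof
  fix k assume "k \<in> bal_exps n m side"
  then have k: "k \<in> expvecs n" and ev: "\<And>f. f < m \<Longrightarrow> even (k (side f 0) + k (side f 1) + k (side f 2))"
    by (auto simp: bal_exps_def balanced_def)
  define w where "w = (\<lambda>f c. if f < m \<and> c < 3 then
       (k (side f c) + k (side f ((c + 1) mod 3)) - k (side f ((c + 2) mod 3))) div 2 else 0)"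
  have side_wt_w: "side_wt w f a = k (side f a)" if f: "f < m" and a: "a < 3" for f a
  proof -
    obtain q where "k (side f 0) + k (side f 1) + k (side f 2) = 2 * q"
      using ev[OF f] by blast
    moreover have "a = 0 \<or> a = 1 \<or> a = 2" using a by auto
    ultimately show ?thesis
      using f by (auto simp: side_wt_def w_def numeral_2_eq_2) presburger+
  qed
  have "\<forall>f c. m \<le> f \<or> 3 \<le> c \<longrightarrow> w f c = 0"
    by (auto simp: w_def)
  then have w: "w \<in> edge_weight_systems m side"
    by (auto simp: edge_weight_systems_def side_wt_w)
  have "alpha_vec n m side w i = k i" for i
  proof (cases "i < n")
    case True
    then have "face_sides m side i \<noteq> {}"
      using tri by (auto simp: ideal_triangulation_def)
    then obtain f a where "f < m" "a < 3" "side f a = i"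
      by (auto simp: face_sides_def)
    then show ?thesis using alpha_vec_side[OF w] side_wt_w by metis
  next
    case False
    then show ?thesis using k by (simp add: alpha_vec_def expvecs_def)
  qed
  then show "k \<in> alpha_vec n m side ` edge_weight_systems m side"
    using w by (metis ext image_eqI)
qed

lemma bij_betw_alpha_vec: "bij_betw (alpha_vec n m side) (edge_weight_systems m side) (bal_exps n m side)"
  using inj_on_alpha_vec alpha_vec_in_bal_exps bal_exps_subset_alpha_vec_image
  by (auto simp: bij_betw_def)

end

lemma weyl_eq_cscale_mono: "weyl n \<sigma> \<omega> = (\<lambda>k. cscale (\<omega> powi (- (\<Sum>v<n. \<Sum>u<v. k u * k v * \<sigma> u v))) (mono k))"
  by (simp add: weyl_def fun_eq_iff)

lemma inj_weyl:
  assumes "\<omega> \<noteq> 0"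
  shows "inj (weyl n \<sigma> \<omega>)"
proof (rule injI)
  fix k l assume eq: "weyl n \<sigma> \<omega> k = weyl n \<sigma> \<omega> l"
  have "weyl n \<sigma> \<omega> k k \<noteq> 0"
    using assms by (simp add: weyl_def cscale_mono_apply)
  then have "weyl n \<sigma> \<omega> l k \<noteq> 0"
    by (simp add: eq)
  then show "k = l"
    by (simp add: weyl_def cscale_mono_apply split: if_splits)
qed

theorem lemma3p1:
  fixes n m :: nat and side :: "nat \<Rightarrow> nat \<Rightarrow> nat" and \<omega> :: complex
  assumes "ideal_triangulation n m side"
    and "\<omega> \<noteq> 0"
  shows "inj_on (Z_alpha n m side \<omega>) (edge_weight_systems m side)
    \<and> \<not> module.dependent cscale (Z_alpha n m side \<omega> ` edge_weight_systems m side)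
    \<and> module.span cscale (Z_alpha n m side \<omega> ` edge_weight_systems m side) = bal_alg n m side \<omega>"
proof -
  let ?W = "weyl n (sigma m side) \<omega>"
  have Z: "Z_alpha n m side \<omega> = ?W \<circ> alpha_vec n m side"
    by (simp add: Z_alpha_def fun_eq_iff)
  have image: "Z_alpha n m side \<omega> ` edge_weight_systems m side = ?W ` bal_exps n m side"
    using bij_betw_alpha_vec[OF assms(1)] unfolding Z image_comp[symmetric] by (simp add: bij_betw_def)
  have "inj_on (Z_alpha n m side \<omega>) (edge_weight_systems m side)"
    unfolding Z using inj_on_alpha_vec[OF assms(1)] inj_weyl[OF assms(2)]
    by (blast intro: comp_inj_on inj_on_subset)
  moreover have "\<not> M.dependent (?W ` bal_exps n m side)"
    unfolding weyl_eq_cscale_mono using assms(2) by (intro independent_scaled_monos) simp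
  moreover have "M.span (?W ` bal_exps n m side) = bal_alg n m side \<omega>"
    unfolding weyl_eq_cscale_mono bal_alg_eq_finsupp_on using assms(2)
    by (intro span_scaled_monos) simp
  ultimately show ?thesis
    by (simp add: image)
qed

end
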